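(* Let $n$ be an integer and $\mathbb F$ a field whose characteristic does not divide $2n$. Then the polynomial $S_{n-1}$ is separable over $\mathbb F$, and $(\Delta_n,S_{n-1})=(1)$ in $\mathbb F[\omega]$, where $\Delta_n=S_n'S_{n-1}-S_nS_{n-1}'$.
   Context: The Chebyshev polynomials $S_j(\omega)\in\mathbb Z[\omega]$ are defined for all integers $j$ by $S_0=1$, $S_1=\omega$, $S_{j+1}=\omega S_j-S_{j-1}$, and are considered over $\mathbb F$ by reduction; primes denote derivatives with respect to $\omega$. *)

theory Defs
  imports "HOL-Computational_Algebra.Polynomial"
begin

(* cheb_U k = S_{k-1}: U_0 = 0, U_1 = 1, U_{k+2} = omega U_{k+1} - U_k *)
fun cheb_U :: "nat \<Rightarrow> 'a::comm_ring_1 poly" where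
  "cheb_U 0 = 0"
| "cheb_U (Suc 0) = 1"
| "cheb_U (Suc (Suc k)) = [:0, 1:] * cheb_U (Suc k) - cheb_U k"

(* Chebyshev polynomials S_j for all integers j:
   S_0 = 1, S_1 = omega, S_{j+1} = omega S_j - S_{j-1}  (for all j in Z).
   For j >= -1, S_j = U_{j+1}; for j <= -1, S_j = - S_{-j-2} = - U_{-j-1}. *)
definition cheb_S :: "int \<Rightarrow> 'a::comm_ring_1 poly" where
  "cheb_S j = (if j \<ge> -1 then cheb_U (nat (j + 1)) else - cheb_U (nat (- j - 1)))"

definition separable :: "'a::field poly \<Rightarrow> bool" where
  "separable p \<longleftrightarrow> coprime p (pderiv p)"

definition cheb_Delta :: "int \<Rightarrow> 'a::idom poly" where
  "cheb_Delta n = pderiv (cheb_S n) * cheb_S (n - 1) - cheb_S n * pderiv (cheb_S (n - 1))"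

end

theory Submission
  imports Defs
begin

text \<open>
  Write U_m for S_(m-1). Cassini's identity U_(m+1)^2 - \<omega> U_(m+1) U_m + U_m^2 = 1 shows
  that consecutive U's generate the unit ideal, and the differential relation
  (\<omega>^2 - 4) U_m' = m (2 U_(m+1) - \<omega> U_m) - \<omega> U_m gives 2m U_(m+1) = (\<omega>^2 - 4) U_m'
  modulo U_m. Hence, when 2m is invertible, U_m' is a unit modulo U_m. Up to sign,
  S_(n-1) = U_|n| and \<Delta>_n is the Wronskian V' U - V U' of U = U_|n| and a neighbour
  V = U_(|n|+1) or U_(|n|-1), which is congruent to the unit -V U' modulo U.
\<close>

text \<open>
  \<open>'a poly\<close> for an arbitrary field \<open>'a\<close> has no gcd instance, so coprimality is
  established through Bezout identities.
\<close>

definition comaximal :: "'a::comm_ring_1 \<Rightarrow> 'a \<Rightarrow> bool" where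
  "comaximal a b \<longleftrightarrow> (\<exists>u v. u * a + v * b = 1)"

lemma comaximal_commute: "comaximal a b \<longleftrightarrow> comaximal b a"
  unfolding comaximal_def by (metis (full_types) add.commute)

lemma comaximal_imp_coprime:
  fixes a b :: "'a::{comm_ring_1, algebraic_semidom}"
  assumes "comaximal a b"
  shows "coprime a b"
proof (rule coprimeI)
  obtain u v where uv: "u * a + v * b = 1"
    using assms comaximal_def by blast
  fix c
  assume "c dvd a" and "c dvd b"
  then have "c dvd u * a + v * b" by simp
  with uv show "is_unit c" by simp
qed

lemma comaximal_unit_right:
  assumes "b dvd 1"
  shows "comaximal a b"
proof -
  obtain k where "1 = b * k"
    using assms by (rule dvdE)
  then have "0 * a + k * b = 1"
    by (simp add: mult.commute)
  then show ?thesis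
    unfolding comaximal_def by blast
qed

lemma comaximal_add_mult_right_iff: "comaximal a (c * a + b) \<longleftrightarrow> comaximal a b"
proof
  assume "comaximal a (c * a + b)"
  then obtain u v where "u * a + v * (c * a + b) = 1"
    unfolding comaximal_def by blast
  then have "(u + v * c) * a + v * b = 1"
    by (simp add: algebra_simps)
  then show "comaximal a b"
    unfolding comaximal_def by blast
next
  assume "comaximal a b"
  then obtain u v where "u * a + v * b = 1"
    unfolding comaximal_def by blast
  then have "(u - v * c) * a + v * (c * a + b) = 1"
    by (simp add: algebra_simps)
  then show "comaximal a (c * a + b)"
    unfolding comaximal_def by blast
qed

lemma comaximal_mult_right_iff: "comaximal a (b * c) \<longleftrightarrow> comaximal a b \<and> comaximal a c"
proof (intro iffI conjI)
  assume "comaximal a (b * c)"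
  then obtain u v where uv: "u * a + v * (b * c) = 1"
    unfolding comaximal_def by blast
  then have "u * a + (v * c) * b = 1" and "u * a + (v * b) * c = 1"
    by (simp_all add: algebra_simps)
  then show "comaximal a b" and "comaximal a c"
    unfolding comaximal_def by blast+
next
  assume "comaximal a b \<and> comaximal a c"
  then obtain u v s t where uv: "u * a + v * b = 1" and st: "s * a + t * c = 1"
    unfolding comaximal_def by blast
  have "(u * s * a + u * t * c + v * b * s) * a + (v * t) * (b * c) = (u * a + v * b) * (s * a + t * c)"
    by (simp add: algebra_simps)
  with uv st show "comaximal a (b * c)"
    unfolding comaximal_def by auto
qed

lemma comaximal_minus_right_iff: "comaximal a (- b) \<longleftrightarrow> comaximal a b"
proof -
  have "- b = (- 1) * b" by simp
  moreover have "comaximal a (- 1)"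
    by (rule comaximal_unit_right) simp
  ultimately show ?thesis
    by (simp only: comaximal_mult_right_iff simp_thms)
qed

lemma comaximal_minus_left_iff: "comaximal (- a) b \<longleftrightarrow> comaximal a b"
  by (simp only: comaximal_commute [of _ b] comaximal_minus_right_iff)

text \<open>
  Below, \<open>mult_pCons_left\<close> and \<open>mult_pCons_right\<close> are removed from the simpset so
  that \<open>[:0, 1:] * p\<close> stays a product instead of being unfolded into \<open>pCons\<close>.
\<close>

lemma cheb_U_Cassini:
  "cheb_U (Suc m) ^ 2 - [:0, 1:] * cheb_U (Suc m) * cheb_U m + cheb_U m ^ 2
     = (1 :: 'a::comm_ring_1 poly)"
  by (induction m) (simp_all add: algebra_simps power2_eq_square del: mult_pCons_left mult_pCons_right)

lemma cheb_U_pderiv: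
  "([:0, 1:] ^ 2 - 4) * pderiv (cheb_U m :: 'a::idom poly)
     = of_nat m * (2 * cheb_U (Suc m) - [:0, 1:] * cheb_U m) - [:0, 1:] * cheb_U m"
proof (induction m rule: cheb_U.induct)
  case 1
  then show ?case by simp
next
  case 2
  then show ?case by (simp add: algebra_simps power2_eq_square numeral_poly pderiv_pCons)
next
  case (3 k)
  let ?x = "[:0, 1:] :: 'a poly"
  have "(?x ^ 2 - 4) * pderiv (cheb_U (Suc (Suc k)))
      = (?x ^ 2 - 4) * cheb_U (Suc k) + ?x * ((?x ^ 2 - 4) * pderiv (cheb_U (Suc k)))
        - (?x ^ 2 - 4) * pderiv (cheb_U k)"
    by (simp add: pderiv_diff pderiv_mult pderiv_pCons algebra_simps)
  also have "\<dots> = (?x ^ 2 - 4) * cheb_U (Suc k)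
        + ?x * (of_nat (Suc k) * (2 * (?x * cheb_U (Suc k) - cheb_U k) - ?x * cheb_U (Suc k))
                - ?x * cheb_U (Suc k))
        - (of_nat k * (2 * cheb_U (Suc k) - ?x * cheb_U k) - ?x * cheb_U k)"
    using 3 by simp
  also have "\<dots> = of_nat (Suc (Suc k)) * (2 * (?x * (?x * cheb_U (Suc k) - cheb_U k) - cheb_U (Suc k))
        - ?x * (?x * cheb_U (Suc k) - cheb_U k)) - ?x * (?x * cheb_U (Suc k) - cheb_U k)"
    by (simp add: algebra_simps power2_eq_square)
  finally show ?case by simp
qed

lemma comaximal_cheb_U_Suc: "comaximal (cheb_U m) (cheb_U (Suc m) :: 'a::comm_ring_1 poly)"
proof -
  have "cheb_U m * cheb_U m + (cheb_U (Suc m) - [:0, 1:] * cheb_U m) * cheb_U (Suc m) = (1 :: 'a poly)"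
    using cheb_U_Cassini [of m]
    by (simp add: algebra_simps power2_eq_square del: mult_pCons_left mult_pCons_right)
  then show ?thesis
    unfolding comaximal_def by blast
qed

lemma comaximal_cheb_U_pderiv:
  assumes "of_nat (2 * m) \<noteq> (0 :: 'a::field)"
  shows "comaximal (cheb_U m) (pderiv (cheb_U m) :: 'a poly)"
proof -
  let ?x = "[:0, 1:] :: 'a poly"
  have "(of_nat (2 * m) :: 'a poly) dvd 1"
    using assms by (simp only: of_nat_poly is_unit_const_poly_iff dvd_field_iff) simp
  then have "comaximal (cheb_U m) (of_nat (2 * m) :: 'a poly)"
    by (rule comaximal_unit_right)
  then have "comaximal (cheb_U m) (of_nat (2 * m) * cheb_U (Suc m) :: 'a poly)"
    unfolding comaximal_mult_right_iff using comaximal_cheb_U_Suc by (rule conjI)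
  also have "of_nat (2 * m) * cheb_U (Suc m)
      = (of_nat (Suc m) * ?x) * cheb_U m + (?x ^ 2 - 4) * pderiv (cheb_U m)"
    using cheb_U_pderiv [of m]
    by (simp add: algebra_simps del: mult_pCons_left mult_pCons_right) (simp only: eq_commute)
  finally show ?thesis
    by (simp only: comaximal_add_mult_right_iff comaximal_mult_right_iff)
qed

lemma comaximal_wronskian:
  fixes u v :: "'a::idom poly"
  assumes "comaximal u (pderiv u)" and "comaximal u v"
  shows "comaximal (pderiv v * u - v * pderiv u) u"
proof -
  have "comaximal u (pderiv v * u + - (v * pderiv u))"
    using assms by (simp only: comaximal_add_mult_right_iff comaximal_minus_right_iff
        comaximal_mult_right_iff mult.commute [of v] simp_thms)
  then show ?thesis
    by (simp add: comaximal_commute)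
qed

lemma cheb_S_le_minus_one: "j \<le> -1 \<Longrightarrow> cheb_S j = - cheb_U (nat (- j - 1))"
  by (cases "j = -1") (simp_all add: cheb_S_def)

lemma cheb_Delta_wronskian_form:
  fixes n :: int
  assumes "n \<noteq> 0"
  obtains v :: "'a::idom poly"
  where "comaximal (cheb_U (nat \<bar>n\<bar>)) v"
    and "cheb_S (n - 1) = cheb_U (nat \<bar>n\<bar>) \<or> cheb_S (n - 1) = - cheb_U (nat \<bar>n\<bar>)"
    and "cheb_Delta n = pderiv v * cheb_U (nat \<bar>n\<bar>) - v * pderiv (cheb_U (nat \<bar>n\<bar>))"
proof (cases "n > 0")
  case True
  then have S: "cheb_S (n - 1) = cheb_U (nat \<bar>n\<bar>)"
    and S': "cheb_S n = cheb_U (Suc (nat \<bar>n\<bar>))"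
    by (simp_all add: cheb_S_def Suc_nat_eq_nat_zadd1 add.commute)
  show ?thesis
    by (rule that [of "cheb_U (Suc (nat \<bar>n\<bar>))"]) (simp_all add: comaximal_cheb_U_Suc cheb_Delta_def S S')
next
  case False
  with assms obtain k where k: "nat \<bar>n\<bar> = Suc k"
    by (cases "nat \<bar>n\<bar>") auto
  with False have "nat (- n - 1) = k"
    by arith
  with False k have S: "cheb_S (n - 1) = - cheb_U (nat \<bar>n\<bar>)"
    and S': "cheb_S n = - cheb_U k"
    by (simp_all add: cheb_S_le_minus_one)
  show ?thesis
    by (rule that [of "cheb_U k"])
      (simp_all add: comaximal_commute comaximal_cheb_U_Suc cheb_Delta_def pderiv_minus S S' k)
qed

theorem lemma5p5:
  fixes n :: int
  assumes "\<not> int CHAR('a::field) dvd 2 * n"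
  shows "separable (cheb_S (n - 1) :: 'a poly)
    \<and> (\<exists>a b :: 'a poly. a * cheb_Delta n + b * cheb_S (n - 1) = 1)"
proof -
  let ?m = "nat \<bar>n\<bar>"
  have "int (2 * ?m) = \<bar>2 * n\<bar>"
    by simp
  then have "\<not> CHAR('a) dvd 2 * ?m"
    using assms by (metis dvd_abs_iff int_dvd_int_iff)
  then have "n \<noteq> 0" and "of_nat (2 * ?m) \<noteq> (0 :: 'a)"
    unfolding of_nat_eq_0_iff_char_dvd by auto
  then obtain v :: "'a poly" where v: "comaximal (cheb_U ?m) v"
    and S: "cheb_S (n - 1) = (cheb_U ?m :: 'a poly) \<or> cheb_S (n - 1) = - (cheb_U ?m :: 'a poly)"
    and Delta: "cheb_Delta n = pderiv v * cheb_U ?m - v * pderiv (cheb_U ?m)"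
    using cheb_Delta_wronskian_form by blast
  have sep: "comaximal (cheb_U ?m) (pderiv (cheb_U ?m) :: 'a poly)"
    using \<open>of_nat (2 * ?m) \<noteq> 0\<close> by (rule comaximal_cheb_U_pderiv)
  have "comaximal (cheb_Delta n) (cheb_U ?m :: 'a poly)"
    unfolding Delta using sep v by (rule comaximal_wronskian)
  then have "comaximal (cheb_Delta n) (cheb_S (n - 1) :: 'a poly)"
    using S by (auto simp: comaximal_minus_right_iff)
  moreover have "comaximal (cheb_S (n - 1)) (pderiv (cheb_S (n - 1)) :: 'a poly)"
    using S sep by (auto simp: pderiv_minus comaximal_minus_left_iff comaximal_minus_right_iff)
  ultimately show ?thesis
    unfolding separable_def comaximal_def [of "cheb_Delta n"] by (auto intro: comaximal_imp_coprime)
qed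

end
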